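(* $(\widetilde{W}_{\tilde v},\prec_{\tilde o^*})$ does not admit a regular nice labeling. Consequently, Thiagarajan's conjecture (a prime event structure is isomorphic to the event structure of a finite 1-safe Petri net if and only if it is regular; equivalently, an event structure is regular if and only if it is a regular trace event structure) is false.
   Context: Let $\mathbf{X}$ be Wise's complete square complex (from Wise, "Complete square complexes"): a $VH$-complex with a single vertex, three vertical edges colored $a,b,c$, two horizontal edges colored $x,y$, and six squares, with horizontal edges oriented left to right and vertical edges bottom to top; its universal cover contains a directed plane whose tiling by (preimages of) these squares is not doubly periodic, and in the quarter-plane spanned by the rays colored $y$ and $c$ from a vertex every positive word in $x,y$ of length $n$ appears as the label of a horizontal path of length $n$ starting at one of the first $2^n$ vertices of the vertical $c$-ray, all these words being distinct. Let $W$ be obtained from the first barycentric subdivision of $\mathbf{X}$ (forgetting colors) by attaching to each edge midpoint of color $\alpha$ a path (tip) of length $r(\alpha)$, for a fixed bijection $r:\{a,b,c,x,y\}\to\{1,\dots,5\}$, with edges oriented as in the subdivision (left to right, bottom to top) and tip edges oriented away from their roots (orientation $o^*$). Let $\widetilde{W}$ be the universal cover of $W$ with induced orientation $\tilde o^*$ and partial order $\prec_{\tilde o^*}$, and for a preimage $\tilde v$ of the original vertex of $\mathbf{X}$ let $\widetilde{W}_{\tilde v}$ be the principal filter of $\tilde v$; $(\widetilde{W}_{\tilde v},\prec_{\tilde o^*})$ is the domain of a regular event structure (finite degree and finitely many isomorphism types of futures of configurations). A nice labeling is a labeling of events (equivalently, of the directed edges of the domain, with opposite edges of every square equally labeled)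 such that co-initial events (edges leaving the same vertex) get different labels; it is regular if it uses a finite alphabet and the labeled event structure has finitely many isomorphism types of labeled futures. Every regular trace labeling is a regular nice labeling. *)

theory Defs
  imports Main
begin

section \<open>Wise's one-vertex VH-complex X (data: its squares)\<close>

datatype hcol = Xh | Yh
datatype vcol = Av | Bv | Cv
datatype col = Hc hcol | Vc vcol (* the five edges of X (all loops at the vertex) *)

text \<open>A square of X: (bottom, right, top, left); horizontal edges go left to right,
  vertical edges bottom to top.\<close>
type_synonym sqr = "hcol \<times> vcol \<times> hcol \<times> vcol"

fun sq_bot :: "sqr \<Rightarrow> hcol" where "sq_bot (b, r, t, l) = b"
fun sq_rgt :: "sqr \<Rightarrow> vcol" where "sq_rgt (b, r, t, l) = r"
fun sq_top :: "sqr \<Rightarrow> hcol" where "sq_top (b, r, t, l) = t"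
fun sq_lft :: "sqr \<Rightarrow> vcol" where "sq_lft (b, r, t, l) = l"

text \<open>Corners of a square as edges of the link of the vertex. A link vertex is an end of an
  edge: (e, False) = initial end, (e, True) = terminal end.\<close>
fun corners :: "sqr \<Rightarrow> ((hcol \<times> bool) \<times> (vcol \<times> bool)) set" where
  "corners (b, r, t, l) =
     {((b, False), (l, False)), ((b, True), (r, False)),
      ((t, False), (l, True)), ((t, True), (r, True))}"

text \<open>Complete VH-complex (Wise): the link is the complete bipartite graph between
  horizontal and vertical edge-ends (each pair joined by exactly one corner).\<close>
definition link_complete :: "sqr set \<Rightarrow> bool" where
  "link_complete S \<longleftrightarrow>
     (\<forall>h i v j. \<exists>!s. s \<in> S \<and> ((h, i), (v, j)) \<in> corners s)"

text \<open>A directed plane in the universal cover of X, described by its tiling: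
  hor k j = colour of the horizontal edge at height k from column j to j+1,
  ver k j = colour of the vertical edge at column j from height k to k+1.\<close>
definition directed_plane :: "sqr set \<Rightarrow> (int \<Rightarrow> int \<Rightarrow> hcol) \<Rightarrow> (int \<Rightarrow> int \<Rightarrow> vcol) \<Rightarrow> bool" where
  "directed_plane S hor ver \<longleftrightarrow>
     (\<forall>k j. (hor k j, ver k (j + 1), hor (k + 1) j, ver k j) \<in> S)"

definition doubly_periodic :: "(int \<Rightarrow> int \<Rightarrow> hcol) \<Rightarrow> (int \<Rightarrow> int \<Rightarrow> vcol) \<Rightarrow> bool" where
  "doubly_periodic hor ver \<longleftrightarrow>
     (\<exists>p1 p2 q1 q2. p1 * q2 - p2 * q1 \<noteq> 0 \<and>
        (\<forall>k j. hor (k + p1) (j + p2) = hor k j \<and> ver (k + p1) (j + p2) = ver k j \<and>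
               hor (k + q1) (j + q2) = hor k j \<and> ver (k + q1) (j + q2) = ver k j))"

text \<open>The quarter-plane spanned by the y-ray (bottom row) and the c-ray (left column).\<close>
definition quarter_plane :: "sqr set \<Rightarrow> (nat \<Rightarrow> nat \<Rightarrow> hcol) \<Rightarrow> (nat \<Rightarrow> nat \<Rightarrow> vcol) \<Rightarrow> bool" where
  "quarter_plane S hor ver \<longleftrightarrow>
     (\<forall>j. hor 0 j = Yh) \<and> (\<forall>k. ver k 0 = Cv) \<and>
     (\<forall>k j. (hor k j, ver k (Suc j), hor (Suc k) j, ver k j) \<in> S)"

definition quarter_words :: "sqr set \<Rightarrow> bool" where
  "quarter_words S \<longleftrightarrow>
     (\<exists>hor ver. quarter_plane S hor ver \<and>
        (\<forall>n. inj_on (\<lambda>k. map (hor k) [0..<n]) {..<2 ^ n} \<and>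
             (\<forall>w. length w = n \<longrightarrow> (\<exists>k < 2 ^ n. map (hor k) [0..<n] = w))))"

section \<open>The complex W: barycentric subdivision of X with tips attached\<close>

datatype wv = Ov | Mid col | Cen sqr | Tp col nat
  (* Tp e k (1 \<le> k \<le> r e) is the k-th vertex of the tip attached at Mid e *)

datatype we = Half1 col | Half2 col | Up1 sqr | Up2 sqr | Rt1 sqr | Rt2 sqr | TipE col nat

definition W_edges :: "sqr set \<Rightarrow> (col \<Rightarrow> nat) \<Rightarrow> we set" where
  "W_edges S r =
     range Half1 \<union> range Half2 \<union> Up1 ` S \<union> Up2 ` S \<union> Rt1 ` S \<union> Rt2 ` S \<union>
     {TipE e k | e k. k < r e}"

text \<open>Source and target of edges in the orientation o* (left to right, bottom to top,
  tip edges away from their roots).\<close>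
fun wsrc :: "we \<Rightarrow> wv" where
  "wsrc (Half1 e) = Ov"
| "wsrc (Half2 e) = Mid e"
| "wsrc (Up1 s) = Mid (Hc (sq_bot s))"
| "wsrc (Up2 s) = Cen s"
| "wsrc (Rt1 s) = Mid (Vc (sq_lft s))"
| "wsrc (Rt2 s) = Cen s"
| "wsrc (TipE e k) = (if k = 0 then Mid e else Tp e k)"

fun wtgt :: "we \<Rightarrow> wv" where
  "wtgt (Half1 e) = Mid e"
| "wtgt (Half2 e) = Ov"
| "wtgt (Up1 s) = Cen s"
| "wtgt (Up2 s) = Mid (Hc (sq_top s))"
| "wtgt (Rt1 s) = Cen s"
| "wtgt (Rt2 s) = Mid (Vc (sq_rgt s))"
| "wtgt (TipE e k) = Tp e (Suc k)"

text \<open>The four small squares into which a square s of X is subdivided, each given as a pair of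
  directed 2-paths ([e1,e2],[f1,f2]) from its source corner to its sink corner.\<close>
definition W_squares :: "sqr set \<Rightarrow> ((we \<times> we) \<times> (we \<times> we)) set" where
  "W_squares S = (\<Union>s\<in>S.
     {((Half1 (Hc (sq_bot s)), Up1 s), (Half1 (Vc (sq_lft s)), Rt1 s)),
      ((Half2 (Hc (sq_bot s)), Half1 (Vc (sq_rgt s))), (Up1 s, Rt2 s)),
      ((Half2 (Vc (sq_lft s)), Half1 (Hc (sq_top s))), (Rt1 s, Up2 s)),
      ((Rt2 s, Half2 (Vc (sq_rgt s))), (Up2 s, Half2 (Hc (sq_top s))))})"

section \<open>Edge paths and the universal cover of W\<close>

type_synonym wpath = "(we \<times> bool) list"  (* (edge, traversed forward?) *)

fun dstart :: "we \<times> bool \<Rightarrow> wv" where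
  "dstart (e, d) = (if d then wsrc e else wtgt e)"
fun dend :: "we \<times> bool \<Rightarrow> wv" where
  "dend (e, d) = (if d then wtgt e else wsrc e)"

fun is_path :: "sqr set \<Rightarrow> (col \<Rightarrow> nat) \<Rightarrow> wv \<Rightarrow> wpath \<Rightarrow> bool" where
  "is_path S r u [] = True"
| "is_path S r u (x # p) = (fst x \<in> W_edges S r \<and> dstart x = u \<and> is_path S r (dend x) p)"

fun endpt :: "wv \<Rightarrow> wpath \<Rightarrow> wv" where
  "endpt u [] = u"
| "endpt u (x # p) = endpt (dend x) p"

definition null_loops :: "sqr set \<Rightarrow> wpath set" where
  "null_loops S =
     {[(e, d), (e, \<not> d)] | e d. True} \<union>
     {[(e1, True), (e2, True), (f2, False), (f1, False)] | e1 e2 f1 f2.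
        ((e1, e2), (f1, f2)) \<in> W_squares S \<or> ((f1, f2), (e1, e2)) \<in> W_squares S}"

definition elem_homot :: "sqr set \<Rightarrow> (col \<Rightarrow> nat) \<Rightarrow> wpath \<Rightarrow> wpath \<Rightarrow> bool" where
  "elem_homot S r p q \<longleftrightarrow> is_path S r Ov p \<and> is_path S r Ov q \<and>
     (\<exists>xs ys z. z \<in> null_loops S \<and>
        ((p = xs @ ys \<and> q = xs @ z @ ys) \<or> (q = xs @ ys \<and> p = xs @ z @ ys)))"

definition homot :: "sqr set \<Rightarrow> (col \<Rightarrow> nat) \<Rightarrow> wpath \<Rightarrow> wpath \<Rightarrow> bool" where
  "homot S r = (elem_homot S r)\<^sup>*\<^sup>*"

text \<open>Vertices of the universal cover: homotopy classes of edge paths from the base vertex.\<close>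
definition cls :: "sqr set \<Rightarrow> (col \<Rightarrow> nat) \<Rightarrow> wpath \<Rightarrow> wpath set" where
  "cls S r p = {q. homot S r p q}"

definition UV :: "sqr set \<Rightarrow> (col \<Rightarrow> nat) \<Rightarrow> wpath set set" where
  "UV S r = {cls S r p | p. is_path S r Ov p}"

definition UE :: "sqr set \<Rightarrow> (col \<Rightarrow> nat) \<Rightarrow> wpath set \<Rightarrow> wpath set \<Rightarrow> bool" where
  "UE S r u w \<longleftrightarrow> (\<exists>p e. is_path S r Ov p \<and> e \<in> W_edges S r \<and> wsrc e = endpt Ov p \<and>
      u = cls S r p \<and> w = cls S r (p @ [(e, True)]))"

definition prec :: "sqr set \<Rightarrow> (col \<Rightarrow> nat) \<Rightarrow> wpath set \<Rightarrow> wpath set \<Rightarrow> bool" where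
  "prec S r = (UE S r)\<^sup>*\<^sup>*"

definition filt :: "sqr set \<Rightarrow> (col \<Rightarrow> nat) \<Rightarrow> wpath set \<Rightarrow> wpath set set" where
  "filt S r v = {u. prec S r v u}"

text \<open>Lifted squares of the universal cover: (u, u1, u2, w) with directed edges
  u\<rightarrow>u1\<rightarrow>w and u\<rightarrow>u2\<rightarrow>w; opposite edges are (u,u1),(u2,w) and (u,u2),(u1,w).\<close>
definition USq :: "sqr set \<Rightarrow> (col \<Rightarrow> nat) \<Rightarrow> (wpath set \<times> wpath set \<times> wpath set \<times> wpath set) set" where
  "USq S r = {(cls S r p, cls S r (p @ [(e1, True)]), cls S r (p @ [(f1, True)]),
               cls S r (p @ [(e1, True), (e2, True)])) | p e1 e2 f1 f2.
      is_path S r Ov p \<and> ((e1, e2), (f1, f2)) \<in> W_squares S \<and> endpt Ov p = wsrc e1}"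

definition nice_labeling ::
  "sqr set \<Rightarrow> (col \<Rightarrow> nat) \<Rightarrow> wpath set \<Rightarrow> (wpath set \<times> wpath set \<Rightarrow> 'l) \<Rightarrow> bool" where
  "nice_labeling S r v lab \<longleftrightarrow>
     (\<forall>u u1 u2 w. (u, u1, u2, w) \<in> USq S r \<and> u \<in> filt S r v \<longrightarrow>
        lab (u, u1) = lab (u2, w) \<and> lab (u, u2) = lab (u1, w)) \<and>
     (\<forall>u w1 w2. u \<in> filt S r v \<and> UE S r u w1 \<and> UE S r u w2 \<and> w1 \<noteq> w2 \<longrightarrow>
        lab (u, w1) \<noteq> lab (u, w2))"

text \<open>Isomorphism of (labeled) futures: the principal filters of u and u', as directed graphs
  (Hasse diagrams of the domain order), with labels on directed edges.\<close>
definition future_iso ::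
  "sqr set \<Rightarrow> (col \<Rightarrow> nat) \<Rightarrow> (wpath set \<times> wpath set \<Rightarrow> 'l) \<Rightarrow> wpath set \<Rightarrow> wpath set \<Rightarrow> bool" where
  "future_iso S r lab u u' \<longleftrightarrow>
     (\<exists>f. bij_betw f (filt S r u) (filt S r u') \<and>
        (\<forall>x\<in>filt S r u. \<forall>y\<in>filt S r u. UE S r x y \<longleftrightarrow> UE S r (f x) (f y)) \<and>
        (\<forall>x\<in>filt S r u. \<forall>y\<in>filt S r u. UE S r x y \<longrightarrow> lab (f x, f y) = lab (x, y)))"

definition regular_nice_labeling ::
  "sqr set \<Rightarrow> (col \<Rightarrow> nat) \<Rightarrow> wpath set \<Rightarrow> (wpath set \<times> wpath set \<Rightarrow> 'l) \<Rightarrow> bool" where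
  "regular_nice_labeling S r v lab \<longleftrightarrow>
     nice_labeling S r v lab \<and>
     finite (lab ` {(u, w). u \<in> filt S r v \<and> UE S r u w}) \<and>
     (\<exists>K. finite K \<and> K \<subseteq> filt S r v \<and>
        (\<forall>u\<in>filt S r v. \<exists>u'\<in>K. future_iso S r lab u u'))"

text \<open>Regularity of the (unlabeled) event structure with domain filt v: finite degree and
  finitely many isomorphism types of futures of configurations.\<close>
definition regular_domain :: "sqr set \<Rightarrow> (col \<Rightarrow> nat) \<Rightarrow> wpath set \<Rightarrow> bool" where
  "regular_domain S r v \<longleftrightarrow>
     (\<forall>u\<in>filt S r v. finite {w. UE S r u w}) \<and>
     (\<exists>K. finite K \<and> K \<subseteq> filt S r v \<and>
        (\<forall>u\<in>filt S r v. \<exists>u'\<in>K. future_iso S r (\<lambda>_. ()) u u'))"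

end

theory Submission
  imports Defs
begin

text \<open>
  The domain is regular because deck transformations of the universal cover identify the
  futures of any two lifts of the same vertex of the finite complex W.

  In the lift of the quarter-plane, opposite edges of
  squares carry equal labels, so every row of horizontal edges is labeled like the bottom row.
  A labeled isomorphism between the futures of two vertices of the c-ray therefore maps row to
  row, because co-initial edges have distinct labels; since the tip of length r(\<alpha>) attached
  at a midpoint of colour \<alpha> is visible in the future, it also preserves the x,y-words read
  along the rows. With finitely many labeled futures, two vertices of the c-ray have isomorphic
  futures, so their rows carry the same words, contradicting the distinctness of the words.
\<close>

section \<open>Edge paths and their homotopy\<close>

lemma is_path_append [simp]:
  "is_path S r u (p @ q) \<longleftrightarrow> is_path S r u p \<and> is_path S r (endpt u p) q"
  by (induction p arbitrary: u) auto

lemma endpt_append [simp]: "endpt u (p @ q) = endpt (endpt u p) q"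
  by (induction p arbitrary: u) auto

lemma W_squares_edges:
  assumes "((e1, e2), (f1, f2)) \<in> W_squares S"
  shows "e1 \<in> W_edges S r \<and> e2 \<in> W_edges S r \<and> f1 \<in> W_edges S r \<and> f2 \<in> W_edges S r \<and>
         wsrc e1 = wsrc f1 \<and> wtgt e1 = wsrc e2 \<and> wtgt f1 = wsrc f2 \<and> wtgt e2 = wtgt f2"
  using assms unfolding W_squares_def W_edges_def
  by (auto elim!: sq_top.elims sq_bot.elims sq_lft.elims sq_rgt.elims)

lemma endpt_null_loop:
  assumes "z \<in> null_loops S" "is_path S r u z"
  shows "endpt u z = u"
  using assms W_squares_edges unfolding null_loops_def by auto

lemma backtrack_null_loop: "[(e, d), (e, \<not> d)] \<in> null_loops S"
  unfolding null_loops_def by blast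

lemma square_null_loop:
  "((e1, e2), (f1, f2)) \<in> W_squares S \<Longrightarrow> [(e1, True), (e2, True), (f2, False), (f1, False)] \<in> null_loops S"
  unfolding null_loops_def by blast

text \<open>Number of forward minus backward edges; it grows by one along every directed edge
  of the universal cover, which makes the induced order antisymmetric.\<close>
definition height :: "wpath \<Rightarrow> int" where
  "height p = (\<Sum>x\<leftarrow>p. if snd x then 1 else -1)"

lemma height_append [simp]: "height (p @ q) = height p + height q"
  by (simp add: height_def)

lemma height_null_loop: "z \<in> null_loops S \<Longrightarrow> height z = 0"
  unfolding null_loops_def height_def by auto

lemma elem_homot_insert:
  "z \<in> null_loops S \<Longrightarrow> is_path S r Ov (xs @ ys) \<Longrightarrow> is_path S r Ov (xs @ z @ ys) \<Longrightarrow>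
    elem_homot S r (xs @ ys) (xs @ z @ ys)"
  unfolding elem_homot_def by blast

lemma elem_homot_sym: "elem_homot S r p q \<Longrightarrow> elem_homot S r q p"
  unfolding elem_homot_def by blast

lemma elem_homot_invariants:
  assumes "elem_homot S r p q"
  shows "is_path S r Ov q \<and> endpt Ov q = endpt Ov p \<and> height q = height p"
proof -
  obtain xs ys z where z: "z \<in> null_loops S" and paths: "is_path S r Ov p" "is_path S r Ov q"
    and "(p = xs @ ys \<and> q = xs @ z @ ys) \<or> (q = xs @ ys \<and> p = xs @ z @ ys)"
    using assms unfolding elem_homot_def by blast
  then consider "p = xs @ ys" "q = xs @ z @ ys" | "q = xs @ ys" "p = xs @ z @ ys" by blast
  then show ?thesis
    by cases (use paths endpt_null_loop[OF z] height_null_loop[OF z] in auto)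
qed

lemma homot_invariants:
  assumes "homot S r p q" "is_path S r Ov p"
  shows "is_path S r Ov q \<and> endpt Ov q = endpt Ov p \<and> height q = height p"
  using assms(1) unfolding homot_def
  by (induction rule: rtranclp_induct) (use assms(2) elem_homot_invariants in auto)

lemma homot_refl: "homot S r p p"
  unfolding homot_def by simp

lemma homot_sym: "homot S r p q \<Longrightarrow> homot S r q p"
  unfolding homot_def
  by (induction rule: rtranclp_induct)
     (auto intro: converse_rtranclp_into_rtranclp elem_homot_sym)

lemma homot_trans: "homot S r p q \<Longrightarrow> homot S r q s \<Longrightarrow> homot S r p s"
  unfolding homot_def by simp

lemma cls_eq_iff: "cls S r p = cls S r q \<longleftrightarrow> homot S r p q"
  unfolding cls_def using homot_refl homot_sym homot_trans by blast

lemma elem_homot_append_right: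
  assumes "elem_homot S r p q" "is_path S r Ov (p @ s)"
  shows "elem_homot S r (p @ s) (q @ s)"
proof -
  have q: "is_path S r Ov (q @ s)"
    using elem_homot_invariants[OF assms(1)] assms(2) by simp
  obtain xs ys z where "z \<in> null_loops S"
    and "(p = xs @ ys \<and> q = xs @ z @ ys) \<or> (q = xs @ ys \<and> p = xs @ z @ ys)"
    using assms(1) unfolding elem_homot_def by blast
  then show ?thesis
    using elem_homot_insert[of z S r xs "ys @ s"] elem_homot_sym assms(2) q by auto
qed

lemma homot_append_right:
  assumes "homot S r p q" "is_path S r Ov (p @ s)"
  shows "homot S r (p @ s) (q @ s)"
  using assms(1) unfolding homot_def
proof (induction rule: rtranclp_induct)
  case (step y z)
  have "is_path S r Ov y" "endpt Ov y = endpt Ov p"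
    using homot_invariants[of S r p y] step(1) assms(2) unfolding homot_def by auto
  then have "is_path S r Ov (y @ s)" using assms(2) by simp
  then show ?case using step elem_homot_append_right by (metis rtranclp.rtrancl_into_rtrancl)
qed simp

lemma homot_append_left:
  assumes "homot S r p q" "is_path S r Ov a" "endpt Ov a = Ov"
  shows "homot S r (a @ p) (a @ q)"
proof -
  have "elem_homot S r (a @ p') (a @ q')" if h: "elem_homot S r p' q'" for p' q'
  proof -
    obtain xs ys z where "z \<in> null_loops S" "is_path S r Ov p'" "is_path S r Ov q'"
      and "(p' = xs @ ys \<and> q' = xs @ z @ ys) \<or> (q' = xs @ ys \<and> p' = xs @ z @ ys)"
      using h unfolding elem_homot_def by blast
    then show ?thesis
      using elem_homot_insert[of z S r "a @ xs" ys] elem_homot_sym assms(2,3) by auto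
  qed
  with assms(1) show ?thesis
    unfolding homot_def by (induction rule: rtranclp_induct) (auto intro: rtranclp.rtrancl_into_rtrancl)
qed

definition rev_path :: "wpath \<Rightarrow> wpath" where
  "rev_path p = rev (map (\<lambda>(e, d). (e, \<not> d)) p)"

lemma rev_path_Nil [simp]: "rev_path [] = []"
  unfolding rev_path_def by simp

lemma rev_path_Cons [simp]: "rev_path (x # p) = rev_path p @ [(fst x, \<not> snd x)]"
  unfolding rev_path_def by (cases x) auto

lemma rev_path_rev_path [simp]: "rev_path (rev_path p) = p"
  unfolding rev_path_def by (induction p) auto

lemma is_path_rev_path:
  "is_path S r u p \<Longrightarrow> is_path S r (endpt u p) (rev_path p) \<and> endpt (endpt u p) (rev_path p) = u"
  by (induction p arbitrary: u) (auto split: prod.splits)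

lemma homot_cancel_rev_path:
  assumes "is_path S r Ov pre" "is_path S r (endpt Ov pre) p" "is_path S r (endpt Ov pre) s"
  shows "homot S r (pre @ p @ rev_path p @ s) (pre @ s)"
  using assms
proof (induction p arbitrary: pre s)
  case (Cons x p)
  obtain e d where x: "x = (e, d)" by fastforce
  have "homot S r ((pre @ [x]) @ p @ rev_path p @ [(e, \<not> d)] @ s) ((pre @ [x]) @ [(e, \<not> d)] @ s)"
    by (rule Cons.IH) (use Cons.prems x in auto)
  moreover have "elem_homot S r (pre @ [(e, d), (e, \<not> d)] @ s) (pre @ s)"
    by (rule elem_homot_sym, rule elem_homot_insert[OF backtrack_null_loop]) (use Cons.prems x in auto)
  then have "homot S r (pre @ [(e, d), (e, \<not> d)] @ s) (pre @ s)"
    unfolding homot_def by blast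
  ultimately show ?case
    using x homot_trans by fastforce
qed (simp add: homot_refl)

lemma homot_square:
  assumes sq: "((e1, e2), (f1, f2)) \<in> W_squares S"
    and p: "is_path S r Ov p" "endpt Ov p = wsrc e1"
  shows "homot S r (p @ [(e1, True), (e2, True)]) (p @ [(f1, True), (f2, True)])"
proof -
  note E = W_squares_edges[OF sq, of r]
  have "elem_homot S r (p @ [(f1, True), (f2, True)])
          (p @ [(e1, True), (e2, True), (f2, False), (f1, False), (f1, True), (f2, True)])"
    using elem_homot_insert[OF square_null_loop[OF sq], of r p "[(f1, True), (f2, True)]"] E p
    by simp
  moreover have "elem_homot S r (p @ [(e1, True), (e2, True), (f2, False), (f2, True)])
                   (p @ [(e1, True), (e2, True), (f2, False), (f1, False), (f1, True), (f2, True)])"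
    using elem_homot_insert[OF backtrack_null_loop[of f1 False S], of r
        "p @ [(e1, True), (e2, True), (f2, False)]" "[(f2, True)]"] E p
    by simp
  moreover have "elem_homot S r (p @ [(e1, True), (e2, True)])
                   (p @ [(e1, True), (e2, True), (f2, False), (f2, True)])"
    using elem_homot_insert[OF backtrack_null_loop[of f2 False S], of r "p @ [(e1, True), (e2, True)]" "[]"]
      E p
    by simp
  ultimately have "homot S r (p @ [(f1, True), (f2, True)]) (p @ [(e1, True), (e2, True)])"
    unfolding homot_def
    by (meson elem_homot_sym r_into_rtranclp rtranclp.rtrancl_into_rtrancl)
  then show ?thesis by (rule homot_sym)
qed

section \<open>Vertices and edges of the universal cover\<close>

definition cls_rep :: "sqr set \<Rightarrow> (col \<Rightarrow> nat) \<Rightarrow> wpath set \<Rightarrow> wpath" where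
  "cls_rep S r U = (SOME q. is_path S r Ov q \<and> U = cls S r q)"

lemma cls_rep_homot:
  assumes "is_path S r Ov q"
  shows "is_path S r Ov (cls_rep S r (cls S r q)) \<and> homot S r q (cls_rep S r (cls S r q))"
proof -
  have "is_path S r Ov (cls_rep S r (cls S r q)) \<and> cls S r q = cls S r (cls_rep S r (cls S r q))"
    unfolding cls_rep_def by (rule someI_ex) (use assms in blast)
  then show ?thesis using cls_eq_iff by blast
qed

definition cls_endpt :: "sqr set \<Rightarrow> (col \<Rightarrow> nat) \<Rightarrow> wpath set \<Rightarrow> wv" where
  "cls_endpt S r U = endpt Ov (cls_rep S r U)"

definition cls_height :: "sqr set \<Rightarrow> (col \<Rightarrow> nat) \<Rightarrow> wpath set \<Rightarrow> int" where
  "cls_height S r U = height (cls_rep S r U)"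

lemma cls_endpt_cls: "is_path S r Ov q \<Longrightarrow> cls_endpt S r (cls S r q) = endpt Ov q"
  unfolding cls_endpt_def using cls_rep_homot homot_invariants by metis

lemma cls_height_cls: "is_path S r Ov q \<Longrightarrow> cls_height S r (cls S r q) = height q"
  unfolding cls_height_def using cls_rep_homot homot_invariants by metis

lemma cls_neq_if_endpt_neq:
  "is_path S r Ov p \<Longrightarrow> is_path S r Ov q \<Longrightarrow> endpt Ov p \<noteq> endpt Ov q \<Longrightarrow> cls S r p \<noteq> cls S r q"
  using cls_endpt_cls by metis

lemma UE_cls_iff:
  assumes q: "is_path S r Ov q"
  shows "UE S r (cls S r q) W \<longleftrightarrow>
     (\<exists>e\<in>W_edges S r. wsrc e = endpt Ov q \<and> W = cls S r (q @ [(e, True)]))"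
proof
  assume "UE S r (cls S r q) W"
  then obtain p e where p: "is_path S r Ov p" "e \<in> W_edges S r" "wsrc e = endpt Ov p"
    "cls S r q = cls S r p" "W = cls S r (p @ [(e, True)])" unfolding UE_def by blast
  have "homot S r p q" "endpt Ov p = endpt Ov q"
    using p(4) homot_invariants[OF _ q, of p] cls_eq_iff homot_sym by metis+
  moreover from this have "homot S r (p @ [(e, True)]) (q @ [(e, True)])"
    using homot_append_right p by simp
  ultimately show "\<exists>e\<in>W_edges S r. wsrc e = endpt Ov q \<and> W = cls S r (q @ [(e, True)])"
    using p cls_eq_iff by metis
qed (use q in \<open>auto simp: UE_def\<close>)

lemma UE_intro:
  "is_path S r Ov q \<Longrightarrow> e \<in> W_edges S r \<Longrightarrow> wsrc e = endpt Ov q \<Longrightarrow>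
    UE S r (cls S r q) (cls S r (q @ [(e, True)]))"
  using UE_cls_iff by blast

lemma UE_UV: "UE S r U W \<Longrightarrow> W \<in> UV S r"
  unfolding UE_def UV_def by force

lemma prec_UV: "prec S r U W \<Longrightarrow> U \<in> UV S r \<Longrightarrow> W \<in> UV S r"
  unfolding prec_def by (induction rule: rtranclp_induct) (auto intro: UE_UV)

lemma filt_UV: "U \<in> filt S r (cls S r p) \<Longrightarrow> is_path S r Ov p \<Longrightarrow> U \<in> UV S r"
  unfolding filt_def UV_def using prec_UV[of S r "cls S r p" U] UV_def by blast

lemma UE_height: "UE S r U W \<Longrightarrow> cls_height S r W = cls_height S r U + 1"
  unfolding UE_def by (auto simp: cls_height_cls height_def)

lemma prec_height: "prec S r U W \<Longrightarrow> cls_height S r U \<le> cls_height S r W"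
  unfolding prec_def by (induction rule: rtranclp_induct) (auto dest: UE_height)

lemma filt_self: "u \<in> filt S r u"
  unfolding filt_def prec_def by simp

lemma filt_closed: "x \<in> filt S r u \<Longrightarrow> UE S r x y \<Longrightarrow> y \<in> filt S r u"
  unfolding filt_def prec_def by auto

lemma filt_root_iff:
  assumes "x \<in> filt S r u"
  shows "x = u \<longleftrightarrow> \<not> (\<exists>y\<in>filt S r u. UE S r y x)"
proof
  assume "x = u"
  then show "\<not> (\<exists>y\<in>filt S r u. UE S r y x)"
    unfolding filt_def using prec_height UE_height by fastforce
next
  assume "\<not> (\<exists>y\<in>filt S r u. UE S r y x)"
  moreover have "prec S r u x" using assms unfolding filt_def by auto
  ultimately show "x = u" unfolding prec_def filt_def
    by (metis mem_Collect_eq rtranclp.cases)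
qed

section \<open>Deck transformations and regularity of the domain\<close>

definition deck :: "sqr set \<Rightarrow> (col \<Rightarrow> nat) \<Rightarrow> wpath \<Rightarrow> wpath set \<Rightarrow> wpath set" where
  "deck S r a U = cls S r (a @ cls_rep S r U)"

lemma deck_cls:
  assumes "is_path S r Ov a" "endpt Ov a = Ov" "is_path S r Ov q"
  shows "deck S r a (cls S r q) = cls S r (a @ q)"
  unfolding deck_def cls_eq_iff
  using homot_append_left[OF _ assms(1,2)] cls_rep_homot[OF assms(3)] homot_sym by blast

lemma deck_UE:
  assumes "is_path S r Ov a" "endpt Ov a = Ov" "UE S r x y"
  shows "UE S r (deck S r a x) (deck S r a y)"
proof -
  obtain p e where p: "is_path S r Ov p" "e \<in> W_edges S r" "wsrc e = endpt Ov p"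
    "x = cls S r p" "y = cls S r (p @ [(e, True)])" using assms(3) unfolding UE_def by blast
  then show ?thesis
    using deck_cls[OF assms(1,2)] UE_intro[of S r "a @ p" e] assms(1,2) by simp
qed

lemma deck_prec:
  assumes "is_path S r Ov a" "endpt Ov a = Ov" "prec S r x y"
  shows "prec S r (deck S r a x) (deck S r a y)"
  using assms(3) unfolding prec_def
  by (induction rule: rtranclp_induct)
     (auto intro: rtranclp.rtrancl_into_rtrancl deck_UE[OF assms(1,2)])

lemma cls_cancel_rev_path:
  assumes "is_path S r Ov pre" "is_path S r (endpt Ov pre) p" "is_path S r (endpt Ov pre) s"
  shows "cls S r (pre @ p @ rev_path p @ s) = cls S r (pre @ s)"
  using homot_cancel_rev_path[OF assms] cls_eq_iff by blast

lemma deck_deck: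
  assumes p: "is_path S r Ov p" "is_path S r Ov p'" "endpt Ov p = endpt Ov p'"
    and x: "x \<in> UV S r"
  shows "deck S r (p @ rev_path p') (deck S r (p' @ rev_path p) x) = x"
proof -
  obtain q where q: "is_path S r Ov q" "x = cls S r q" using x unfolding UV_def by blast
  have rev: "is_path S r (endpt Ov p) (rev_path p)" "endpt (endpt Ov p) (rev_path p) = Ov"
    "is_path S r (endpt Ov p) (rev_path p')"
    using is_path_rev_path[OF p(1)] is_path_rev_path[OF p(2)] p(3) by auto
  have loops: "is_path S r Ov (p' @ rev_path p)" "endpt Ov (p' @ rev_path p) = Ov"
    "is_path S r Ov (p @ rev_path p')" "endpt Ov (p @ rev_path p') = Ov"
    using is_path_rev_path[OF p(2)] rev p by auto
  have "cls S r (p @ rev_path p' @ p' @ rev_path p @ q) = cls S r (p @ rev_path p @ q)"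
    using cls_cancel_rev_path[of S r p "rev_path p'" "rev_path p @ q"] rev p(1) q(1) by simp
  also have "\<dots> = cls S r q"
    using cls_cancel_rev_path[of S r "[]" p q] p(1) q(1) by simp
  finally show ?thesis
    using deck_cls loops q by simp
qed

lemma future_iso_same_endpt:
  assumes p: "is_path S r Ov p" "is_path S r Ov p'" "endpt Ov p = endpt Ov p'"
  shows "future_iso S r (\<lambda>_. ()) (cls S r p) (cls S r p')"
proof -
  let ?a = "p' @ rev_path p" and ?b = "p @ rev_path p'"
  have loops: "is_path S r Ov ?a" "endpt Ov ?a = Ov" "is_path S r Ov ?b" "endpt Ov ?b = Ov"
    using is_path_rev_path[OF p(1)] is_path_rev_path[OF p(2)] p by auto
  have "deck S r ?a (cls S r p) = cls S r p'" "deck S r ?b (cls S r p') = cls S r p"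
    using deck_cls[OF loops(1,2) p(1)] deck_cls[OF loops(3,4) p(2)]
      cls_cancel_rev_path[of S r p' "rev_path p" "[]"] cls_cancel_rev_path[of S r p "rev_path p'" "[]"]
      is_path_rev_path[OF p(1)] is_path_rev_path[OF p(2)] p by simp_all
  then have maps: "deck S r ?a ` filt S r (cls S r p) \<subseteq> filt S r (cls S r p')"
    "deck S r ?b ` filt S r (cls S r p') \<subseteq> filt S r (cls S r p)"
    using deck_prec[OF loops(1,2)] deck_prec[OF loops(3,4)] unfolding filt_def by fastforce+
  have inv: "\<forall>x\<in>filt S r (cls S r p). deck S r ?b (deck S r ?a x) = x"
    "\<forall>y\<in>filt S r (cls S r p'). deck S r ?a (deck S r ?b y) = y"
    using deck_deck[of S r p p'] deck_deck[of S r p' p] p filt_UV by auto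
  have "bij_betw (deck S r ?a) (filt S r (cls S r p)) (filt S r (cls S r p'))"
    by (rule bij_betw_byWitness[where f'="deck S r ?b"]) (use inv maps in blast)+
  moreover have "UE S r x y \<longleftrightarrow> UE S r (deck S r ?a x) (deck S r ?a y)"
    if "x \<in> filt S r (cls S r p)" "y \<in> filt S r (cls S r p)" for x y
    using deck_UE[OF loops(1,2), of x y] deck_UE[OF loops(3,4), of "deck S r ?a x" "deck S r ?a y"]
      inv that by metis
  ultimately show ?thesis unfolding future_iso_def by blast
qed

lemma UNIV_col: "(UNIV :: col set) = {Hc Xh, Hc Yh, Vc Av, Vc Bv, Vc Cv}"
proof -
  have "c \<in> {Hc Xh, Hc Yh, Vc Av, Vc Bv, Vc Cv}" for c
  proof (cases c)
    case (Hc h) then show ?thesis by (cases h) auto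
  next
    case (Vc v) then show ?thesis by (cases v) auto
  qed
  then show ?thesis by blast
qed

lemma finite_W_edges:
  assumes "finite S"
  shows "finite (W_edges S r)"
proof -
  have "{TipE e k | e k. k < r e} = (\<Union>e. TipE e ` {..<r e})" by auto
  moreover have "finite (UNIV :: col set)" unfolding UNIV_col by simp
  ultimately show ?thesis unfolding W_edges_def using assms by simp
qed

definition W_vertices :: "sqr set \<Rightarrow> (col \<Rightarrow> nat) \<Rightarrow> wv set" where
  "W_vertices S r = insert Ov (wsrc ` W_edges S r \<union> wtgt ` W_edges S r)"

lemma finite_W_vertices: "finite S \<Longrightarrow> finite (W_vertices S r)"
  unfolding W_vertices_def using finite_W_edges by blast

lemma endpt_W_vertices:
  "is_path S r u q \<Longrightarrow> u \<in> W_vertices S r \<Longrightarrow> endpt u q \<in> W_vertices S r"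
proof (induction q arbitrary: u)
  case (Cons x q)
  have "dend x \<in> W_vertices S r" using Cons.prems by (cases x) (auto simp: W_vertices_def)
  then show ?case using Cons by simp
qed simp

lemma regular_domain_cls:
  assumes "finite S" "is_path S r Ov p0"
  shows "regular_domain S r (cls S r p0)"
proof -
  let ?F = "filt S r (cls S r p0)"
  have "\<exists>q. is_path S r Ov q \<and> cls S r q = u" if "u \<in> ?F" for u
    using filt_UV[OF that assms(2)] unfolding UV_def by blast
  then obtain rep where rep: "\<And>u. u \<in> ?F \<Longrightarrow> is_path S r Ov (rep u)" "\<And>u. u \<in> ?F \<Longrightarrow> cls S r (rep u) = u"
    by metis
  have "finite {w. UE S r u w}" if "u \<in> ?F" for u
  proof -
    have "{w. UE S r u w} \<subseteq> (\<lambda>e. cls S r (rep u @ [(e, True)])) ` W_edges S r"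
      using UE_cls_iff[OF rep(1)[OF that]] rep(2)[OF that] by auto
    then show ?thesis using finite_W_edges[OF assms(1)] finite_subset by blast
  qed
  moreover
  define pick where "pick x = (SOME u. u \<in> ?F \<and> cls_endpt S r u = x)" for x
  have pick: "pick (cls_endpt S r u) \<in> ?F \<and> cls_endpt S r (pick (cls_endpt S r u)) = cls_endpt S r u"
    if "u \<in> ?F" for u
    unfolding pick_def by (rule someI_ex) (use that in blast)
  let ?K = "pick ` cls_endpt S r ` ?F"
  have "future_iso S r (\<lambda>_. ()) u (pick (cls_endpt S r u))" if u: "u \<in> ?F" for u
  proof -
    let ?u' = "pick (cls_endpt S r u)"
    have u': "?u' \<in> ?F" "cls_endpt S r ?u' = cls_endpt S r u" using pick[OF u] by auto
    have "endpt Ov (rep u) = endpt Ov (rep ?u')"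
      using cls_endpt_cls[OF rep(1)[OF u]] cls_endpt_cls[OF rep(1)[OF u'(1)]]
        rep(2)[OF u] rep(2)[OF u'(1)] u'(2) by simp
    then show ?thesis
      using future_iso_same_endpt[OF rep(1)[OF u] rep(1)[OF u'(1)]] rep(2)[OF u] rep(2)[OF u'(1)] by simp
  qed
  then have "\<forall>u\<in>?F. \<exists>u'\<in>?K. future_iso S r (\<lambda>_. ()) u u'" by blast
  moreover have "cls_endpt S r u \<in> W_vertices S r" if "u \<in> ?F" for u
    using endpt_W_vertices[OF rep(1)[OF that]] cls_endpt_cls[OF rep(1)[OF that]] rep(2)[OF that]
    by (simp add: W_vertices_def)
  then have "finite (cls_endpt S r ` ?F)"
    using finite_W_vertices[OF assms(1)] finite_subset[of "cls_endpt S r ` ?F"] by blast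
  then have "finite ?K" by simp
  moreover have "?K \<subseteq> ?F" using pick by blast
  ultimately show ?thesis
    unfolding regular_domain_def by blast
qed

section \<open>Isomorphisms of futures\<close>

lemma future_iso_sym:
  assumes "future_iso S r lab u u'"
  shows "future_iso S r lab u' u"
proof -
  obtain f where f: "bij_betw f (filt S r u) (filt S r u')"
    "\<forall>x\<in>filt S r u. \<forall>y\<in>filt S r u. UE S r x y \<longleftrightarrow> UE S r (f x) (f y)"
    "\<forall>x\<in>filt S r u. \<forall>y\<in>filt S r u. UE S r x y \<longrightarrow> lab (f x, f y) = lab (x, y)"
    using assms unfolding future_iso_def by blast
  let ?g = "inv_into (filt S r u) f"
  have g: "bij_betw ?g (filt S r u') (filt S r u)" using bij_betw_inv_into f(1) by blast
  have gx: "f (?g x) = x" "?g x \<in> filt S r u" if "x \<in> filt S r u'" for x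
    using f(1) g that by (auto simp: bij_betw_inv_into_right bij_betwE)
  have "UE S r x y \<longleftrightarrow> UE S r (?g x) (?g y)" if "x \<in> filt S r u'" "y \<in> filt S r u'" for x y
    using f(2) gx[OF that(1)] gx[OF that(2)] by force
  moreover have "lab (?g x, ?g y) = lab (x, y)"
    if "x \<in> filt S r u'" "y \<in> filt S r u'" "UE S r x y" for x y
    using f(3) gx[OF that(1)] gx[OF that(2)] calculation[OF that(1,2)] that(3) by force
  ultimately show ?thesis using g unfolding future_iso_def by blast
qed

lemma future_iso_trans:
  assumes "future_iso S r lab u u'" "future_iso S r lab u' u''"
  shows "future_iso S r lab u u''"
proof -
  obtain f where f: "bij_betw f (filt S r u) (filt S r u')"
    "\<forall>x\<in>filt S r u. \<forall>y\<in>filt S r u. UE S r x y \<longleftrightarrow> UE S r (f x) (f y)"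
    "\<forall>x\<in>filt S r u. \<forall>y\<in>filt S r u. UE S r x y \<longrightarrow> lab (f x, f y) = lab (x, y)"
    using assms(1) unfolding future_iso_def by blast
  obtain g where g: "bij_betw g (filt S r u') (filt S r u'')"
    "\<forall>x\<in>filt S r u'. \<forall>y\<in>filt S r u'. UE S r x y \<longleftrightarrow> UE S r (g x) (g y)"
    "\<forall>x\<in>filt S r u'. \<forall>y\<in>filt S r u'. UE S r x y \<longrightarrow> lab (g x, g y) = lab (x, y)"
    using assms(2) unfolding future_iso_def by blast
  have "f x \<in> filt S r u'" if "x \<in> filt S r u" for x using f(1) that bij_betwE by blast
  with f(2,3) g(2,3) have
    "\<forall>x\<in>filt S r u. \<forall>y\<in>filt S r u. UE S r x y \<longleftrightarrow> UE S r ((g \<circ> f) x) ((g \<circ> f) y)"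
    "\<forall>x\<in>filt S r u. \<forall>y\<in>filt S r u. UE S r x y \<longrightarrow> lab ((g \<circ> f) x, (g \<circ> f) y) = lab (x, y)"
    by auto
  with bij_betw_trans[OF f(1) g(1)] show ?thesis unfolding future_iso_def by blast
qed

lemma regular_labeling_future_iso_pair:
  assumes "regular_nice_labeling S r v lab" "\<And>k. c k \<in> filt S r v"
  obtains i j :: nat where "i \<noteq> j" "future_iso S r lab (c i) (c j)"
proof -
  obtain K where K: "finite K" "\<forall>u\<in>filt S r v. \<exists>u'\<in>K. future_iso S r lab u u'"
    using assms(1) unfolding regular_nice_labeling_def by blast
  then have "\<forall>k\<in>UNIV. \<exists>u\<in>K. future_iso S r lab (c k) u" using assms(2) by blast
  then obtain u where u: "infinite {k. future_iso S r lab (c k) u}"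
    using pigeonhole_infinite_rel[of UNIV K "\<lambda>k u. future_iso S r lab (c k) u"] K(1) by auto
  obtain i where "i \<in> {k. future_iso S r lab (c k) u}"
    using infinite_imp_nonempty[OF u] by blast
  moreover obtain j where "j \<in> {k. future_iso S r lab (c k) u} - {i}"
    using infinite_imp_nonempty[OF infinite_remove[OF u]] by blast
  ultimately have "i \<noteq> j" "future_iso S r lab (c i) u" "future_iso S r lab (c j) u" by auto
  then show ?thesis using that future_iso_trans future_iso_sym by blast
qed

lemma future_iso_root:
  assumes "bij_betw f (filt S r u) (filt S r u')"
    "\<forall>x\<in>filt S r u. \<forall>y\<in>filt S r u. UE S r x y \<longleftrightarrow> UE S r (f x) (f y)"
  shows "f u = u'"
proof -
  have fu: "f u \<in> filt S r u'" using assms(1) filt_self bij_betwE by blast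
  have "\<not> UE S r y (f u)" if y: "y \<in> filt S r u'" for y
  proof
    assume edge: "UE S r y (f u)"
    obtain x where x: "x \<in> filt S r u" "y = f x"
      using assms(1) y unfolding bij_betw_def by blast
    then have "UE S r x u" using assms(2) filt_self edge by blast
    then show False using filt_root_iff[OF filt_self] x(1) by blast
  qed
  then show ?thesis using filt_root_iff[OF fu] by blast
qed

section \<open>Recognising the tips\<close>

text \<open>From \<open>Z\<close> a directed path of length \<open>n\<close> leaves without branching and ends at a sink;
  in the cover these are exactly the lifted tips.\<close>
fun dangling :: "sqr set \<Rightarrow> (col \<Rightarrow> nat) \<Rightarrow> nat \<Rightarrow> wpath set \<Rightarrow> bool" where
  "dangling S r 0 Z \<longleftrightarrow> (\<forall>W. \<not> UE S r Z W)"
| "dangling S r (Suc n) Z \<longleftrightarrow> (\<exists>W. UE S r Z W \<and> (\<forall>W'. UE S r Z W' \<longrightarrow> W' = W) \<and> dangling S r n W)"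

definition has_tip :: "sqr set \<Rightarrow> (col \<Rightarrow> nat) \<Rightarrow> nat \<Rightarrow> wpath set \<Rightarrow> bool" where
  "has_tip S r n Y \<longleftrightarrow> (\<exists>Z. UE S r Y Z \<and> dangling S r n Z)"

lemma dangling_SucE:
  assumes "dangling S r (Suc n) Z"
  obtains W where "UE S r Z W" "\<And>W'. UE S r Z W' \<Longrightarrow> W' = W" "dangling S r n W"
proof -
  have "\<exists>W. UE S r Z W \<and> (\<forall>W'. UE S r Z W' \<longrightarrow> W' = W) \<and> dangling S r n W"
    using assms by simp
  then show ?thesis using that by (elim exE conjE) blast
qed

lemma dangling_SucI:
  "UE S r Z W \<Longrightarrow> (\<And>W'. UE S r Z W' \<Longrightarrow> W' = W) \<Longrightarrow> dangling S r n W \<Longrightarrow> dangling S r (Suc n) Z"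
  unfolding dangling.simps by blast

lemma dangling_unique: "dangling S r n Z \<Longrightarrow> dangling S r m Z \<Longrightarrow> n = m"
proof (induction n arbitrary: m Z)
  case 0
  show ?case
  proof (cases m)
    case (Suc m')
    then obtain W where "UE S r Z W" using "0.prems"(2) dangling_SucE by metis
    then show ?thesis using "0.prems"(1) by simp
  qed simp
next
  case (Suc n)
  obtain W where W: "UE S r Z W" "\<And>W'. UE S r Z W' \<Longrightarrow> W' = W" "dangling S r n W"
    using dangling_SucE[OF Suc.prems(1)] by metis
  show ?case
  proof (cases m)
    case 0
    then show ?thesis using Suc.prems(2) W(1) by simp
  next
    case (Suc m')
    then obtain W' where W': "UE S r Z W'" "dangling S r m' W'"
      using dangling_SucE Suc.prems(2) by metis
    then show ?thesis using Suc.IH[OF W(3)] W(2) \<open>m = Suc m'\<close> by blast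
  qed
qed

lemma not_dangling_if_branching:
  assumes "UE S r Z W1" "UE S r Z W2" "W1 \<noteq> W2"
  shows "\<not> dangling S r n Z"
proof
  assume "dangling S r n Z"
  then show False
    using assms by (cases n) (auto elim: dangling_SucE)
qed

lemma TipE_in_W_edges: "k < r e \<Longrightarrow> TipE e k \<in> W_edges S r"
  unfolding W_edges_def by simp

lemma W_edge_from_Tp:
  assumes "e' \<in> W_edges S r" "wsrc e' = Tp e k" "1 \<le> k"
  shows "e' = TipE e k \<and> k < r e"
proof (cases e')
  case (TipE e2 k2)
  then show ?thesis using assms by (auto simp: W_edges_def split: if_splits)
qed (use assms in auto)

lemma W_edge_from_Mid:
  assumes "e' \<in> W_edges S r" "wsrc e' = Mid e"
  shows "e' = Half2 e \<or> (\<exists>s\<in>S. e' = Up1 s \<or> e' = Rt1 s) \<or> (e' = TipE e 0 \<and> 0 < r e)"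
proof (cases e')
  case (Up1 s)
  then show ?thesis using assms by (auto simp: W_edges_def)
next
  case (Rt1 s)
  then show ?thesis using assms by (auto simp: W_edges_def)
next
  case (TipE e2 k2)
  then show ?thesis using assms by (auto simp: W_edges_def split: if_splits)
qed (use assms in auto)

lemma dangling_Tp:
  assumes "is_path S r Ov q" "endpt Ov q = Tp e k" "1 \<le> k" "k \<le> r e"
  shows "dangling S r (r e - k) (cls S r q)"
  using assms
proof (induction "r e - k" arbitrary: k q)
  case 0
  have "\<not> UE S r (cls S r q) W" for W
  proof
    assume "UE S r (cls S r q) W"
    then obtain e' where "e' \<in> W_edges S r" "wsrc e' = Tp e k"
      using UE_cls_iff[OF "0.prems"(1)] "0.prems"(2) by auto
    then show False using W_edge_from_Tp[of e' S r e k] "0.hyps" "0.prems"(3) by simp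
  qed
  then show ?case unfolding "0.hyps"[symmetric] by simp
next
  case (Suc d)
  let ?q = "q @ [(TipE e k, True)]"
  have edge: "TipE e k \<in> W_edges S r" "wsrc (TipE e k) = endpt Ov q"
    using Suc.hyps(2) Suc.prems TipE_in_W_edges by auto
  have "d = r e - Suc k" "Suc k \<le> r e" using Suc.hyps(2) by arith+
  then have tail: "dangling S r d (cls S r ?q)"
    using Suc.hyps(1)[of "Suc k" ?q] Suc.prems edge by simp
  have unique: "W' = cls S r ?q" if edge': "UE S r (cls S r q) W'" for W'
  proof -
    obtain e' where "e' \<in> W_edges S r" "wsrc e' = Tp e k" "W' = cls S r (q @ [(e', True)])"
      using edge' UE_cls_iff[OF Suc.prems(1)] Suc.prems(2) by auto
    then show ?thesis using W_edge_from_Tp[of e' S r e k] Suc.prems(3) by simp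
  qed
  have "dangling S r (Suc d) (cls S r q)"
    by (rule dangling_SucI[OF UE_intro[OF Suc.prems(1) edge] unique tail])
  then show ?case unfolding Suc.hyps(2) .
qed

lemma not_dangling_if_two_edges:
  assumes q: "is_path S r Ov q" and e: "e1 \<in> W_edges S r" "e2 \<in> W_edges S r"
    "wsrc e1 = endpt Ov q" "wsrc e2 = endpt Ov q" "wtgt e1 \<noteq> wtgt e2"
  shows "\<not> dangling S r n (cls S r q)"
proof (rule not_dangling_if_branching)
  show "UE S r (cls S r q) (cls S r (q @ [(e1, True)]))" "UE S r (cls S r q) (cls S r (q @ [(e2, True)]))"
    using UE_intro q e by blast+
  show "cls S r (q @ [(e1, True)]) \<noteq> cls S r (q @ [(e2, True)])"
    by (rule cls_neq_if_endpt_neq) (use q e in simp_all)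
qed

lemma not_dangling_Ov:
  assumes "is_path S r Ov q" "endpt Ov q = Ov"
  shows "\<not> dangling S r n (cls S r q)"
  by (rule not_dangling_if_two_edges[of _ _ _ "Half1 (Hc Xh)" "Half1 (Hc Yh)"])
     (use assms in \<open>simp_all add: W_edges_def\<close>)

lemma not_dangling_Cen:
  assumes "is_path S r Ov q" "endpt Ov q = Cen s" "s \<in> S"
  shows "\<not> dangling S r n (cls S r q)"
  by (rule not_dangling_if_two_edges[of _ _ _ "Up2 s" "Rt2 s"])
     (use assms in \<open>simp_all add: W_edges_def\<close>)

lemma has_tip_Mid_iff:
  assumes q: "is_path S r Ov q" "endpt Ov q = Mid e" and "1 \<le> r e"
  shows "has_tip S r n (cls S r q) \<longleftrightarrow> n = r e - 1"
proof
  assume "has_tip S r n (cls S r q)"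
  then obtain e' where e': "e' \<in> W_edges S r" "wsrc e' = Mid e"
    and d: "dangling S r n (cls S r (q @ [(e', True)]))"
    unfolding has_tip_def using UE_cls_iff[OF q(1)] q(2) by auto
  have p: "is_path S r Ov (q @ [(e', True)])" using q e' by simp
  from W_edge_from_Mid[OF e'] show "n = r e - 1"
  proof (elim disjE)
    assume "e' = Half2 e"
    then show ?thesis using not_dangling_Ov[OF p] d by simp
  next
    assume "\<exists>s\<in>S. e' = Up1 s \<or> e' = Rt1 s"
    then show ?thesis using not_dangling_Cen[OF p] d by auto
  next
    assume "e' = TipE e 0 \<and> 0 < r e"
    then show ?thesis using dangling_Tp[OF p, of e 1] dangling_unique d by simp
  qed
next
  assume n: "n = r e - 1"
  have edge: "TipE e 0 \<in> W_edges S r" using TipE_in_W_edges assms(3) by simp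
  then have "dangling S r (r e - 1) (cls S r (q @ [(TipE e 0, True)]))"
    using dangling_Tp[of S r "q @ [(TipE e 0, True)]" e 1] q assms(3) by simp
  then show "has_tip S r n (cls S r q)"
    unfolding has_tip_def n using UE_intro[OF q(1) edge] q(2) by auto
qed

lemma dangling_iso:
  assumes f: "bij_betw f (filt S r u) (filt S r u')"
      "\<forall>x\<in>filt S r u. \<forall>y\<in>filt S r u. UE S r x y \<longleftrightarrow> UE S r (f x) (f y)"
    and x: "x \<in> filt S r u" "dangling S r n x"
  shows "dangling S r n (f x)"
proof -
  have succ: "\<exists>W'\<in>filt S r u. W = f W' \<and> UE S r x W'"
    if "x \<in> filt S r u" "UE S r (f x) W" for x W
  proof -
    have "W \<in> filt S r u'" using filt_closed that f(1) bij_betwE by blast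
    then obtain W' where "W' \<in> filt S r u" "W = f W'" using f(1) unfolding bij_betw_def by blast
    then show ?thesis using f(2) that by blast
  qed
  from x show ?thesis
  proof (induction n arbitrary: x)
    case 0
    have "\<not> UE S r (f x) W" for W
      using succ[OF "0.prems"(1), of W] "0.prems"(2) by auto
    then show ?case by simp
  next
    case (Suc n)
    obtain W where W: "UE S r x W" "\<And>W'. UE S r x W' \<Longrightarrow> W' = W" "dangling S r n W"
      using dangling_SucE[OF Suc.prems(2)] by metis
    have Wf: "W \<in> filt S r u" using filt_closed Suc.prems(1) W(1) by blast
    show ?case
    proof (rule dangling_SucI)
      show "UE S r (f x) (f W)" using f(2) Suc.prems(1) Wf W(1) by blast
      show "W' = f W" if "UE S r (f x) W'" for W'
        using succ[OF Suc.prems(1) that] W(2) by blast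
      show "dangling S r n (f W)" using Suc.IH[OF Wf W(3)] .
    qed
  qed
qed

lemma has_tip_iso:
  assumes f: "bij_betw f (filt S r u) (filt S r u')"
    "\<forall>x\<in>filt S r u. \<forall>y\<in>filt S r u. UE S r x y \<longleftrightarrow> UE S r (f x) (f y)"
    and x: "x \<in> filt S r u" "has_tip S r n x"
  shows "has_tip S r n (f x)"
proof -
  obtain Z where "UE S r x Z" "dangling S r n Z" using x(2) unfolding has_tip_def by blast
  moreover have "Z \<in> filt S r u" using filt_closed x(1) \<open>UE S r x Z\<close> by blast
  ultimately show ?thesis
    unfolding has_tip_def using dangling_iso[OF f] f(2) x(1) by blast
qed

section \<open>The lifted quarter-plane\<close>

definition quarter_sq :: "(nat \<Rightarrow> nat \<Rightarrow> hcol) \<Rightarrow> (nat \<Rightarrow> nat \<Rightarrow> vcol) \<Rightarrow> nat \<Rightarrow> nat \<Rightarrow> sqr" where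
  "quarter_sq hor ver k j = (hor k j, ver k (Suc j), hor (Suc k) j, ver k j)"

text \<open>The subdivided quarter-plane in W, with coordinates doubled: \<open>grid_vertex hor ver a b\<close>
  is the vertex in row \<open>a\<close> and column \<open>b\<close>, and \<open>grid_hedge\<close>, \<open>grid_vedge\<close> are the edges
  leaving it rightwards and upwards.\<close>
definition grid_vertex :: "(nat \<Rightarrow> nat \<Rightarrow> hcol) \<Rightarrow> (nat \<Rightarrow> nat \<Rightarrow> vcol) \<Rightarrow> nat \<Rightarrow> nat \<Rightarrow> wv" where
  "grid_vertex hor ver a b =
    (if even a then (if even b then Ov else Mid (Hc (hor (a div 2) (b div 2))))
     else (if even b then Mid (Vc (ver (a div 2) (b div 2))) else Cen (quarter_sq hor ver (a div 2) (b div 2))))"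

definition grid_hedge :: "(nat \<Rightarrow> nat \<Rightarrow> hcol) \<Rightarrow> (nat \<Rightarrow> nat \<Rightarrow> vcol) \<Rightarrow> nat \<Rightarrow> nat \<Rightarrow> we" where
  "grid_hedge hor ver a b =
    (if even a then (if even b then Half1 (Hc (hor (a div 2) (b div 2))) else Half2 (Hc (hor (a div 2) (b div 2))))
     else (if even b then Rt1 (quarter_sq hor ver (a div 2) (b div 2)) else Rt2 (quarter_sq hor ver (a div 2) (b div 2))))"

definition grid_vedge :: "(nat \<Rightarrow> nat \<Rightarrow> hcol) \<Rightarrow> (nat \<Rightarrow> nat \<Rightarrow> vcol) \<Rightarrow> nat \<Rightarrow> nat \<Rightarrow> we" where
  "grid_vedge hor ver a b =
    (if even b then (if even a then Half1 (Vc (ver (a div 2) (b div 2))) else Half2 (Vc (ver (a div 2) (b div 2))))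
     else (if even a then Up1 (quarter_sq hor ver (a div 2) (b div 2)) else Up2 (quarter_sq hor ver (a div 2) (b div 2))))"

lemma nat_parity_cases:
  fixes a :: nat
  obtains k where "a = 2 * k" | k where "a = Suc (2 * k)"
  by (metis evenE oddE Suc_eq_plus1 add.commute)

locale quarter_grid =
  fixes S :: "sqr set" and r :: "col \<Rightarrow> nat" and p0 :: wpath
    and hor :: "nat \<Rightarrow> nat \<Rightarrow> hcol" and ver :: "nat \<Rightarrow> nat \<Rightarrow> vcol"
  assumes squares: "\<And>k j. quarter_sq hor ver k j \<in> S"
    and p0_path: "is_path S r Ov p0" and p0_end: "endpt Ov p0 = Ov"
begin

lemma grid_hedge:
  "grid_hedge hor ver a b \<in> W_edges S r \<and> wsrc (grid_hedge hor ver a b) = grid_vertex hor ver a b \<and>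
   wtgt (grid_hedge hor ver a b) = grid_vertex hor ver a (Suc b)"
  using squares
  by (cases a rule: nat_parity_cases; cases b rule: nat_parity_cases)
     (auto simp: grid_hedge_def grid_vertex_def W_edges_def quarter_sq_def)

lemma grid_vedge:
  "grid_vedge hor ver a b \<in> W_edges S r \<and> wsrc (grid_vedge hor ver a b) = grid_vertex hor ver a b \<and>
   wtgt (grid_vedge hor ver a b) = grid_vertex hor ver (Suc a) b"
  using squares
  by (cases a rule: nat_parity_cases; cases b rule: nat_parity_cases)
     (auto simp: grid_vedge_def grid_vertex_def W_edges_def quarter_sq_def)

lemma grid_square:
  "((grid_hedge hor ver a b, grid_vedge hor ver a (Suc b)),
    (grid_vedge hor ver a b, grid_hedge hor ver (Suc a) b)) \<in> W_squares S \<or>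
   ((grid_vedge hor ver a b, grid_hedge hor ver (Suc a) b),
    (grid_hedge hor ver a b, grid_vedge hor ver a (Suc b))) \<in> W_squares S"
  using squares
  by (cases a rule: nat_parity_cases; cases b rule: nat_parity_cases)
     (fastforce simp: W_squares_def grid_hedge_def grid_vedge_def quarter_sq_def)+

definition grid_path :: "nat \<Rightarrow> nat \<Rightarrow> wpath" where
  "grid_path a b = p0 @ map (\<lambda>c. (grid_vedge hor ver c 0, True)) [0..<a]
                      @ map (\<lambda>c. (grid_hedge hor ver a c, True)) [0..<b]"

abbreviation G :: "nat \<Rightarrow> nat \<Rightarrow> wpath set" where
  "G a b \<equiv> cls S r (grid_path a b)"

lemma is_path_line:
  assumes "\<And>c. c < n \<Longrightarrow> E c \<in> W_edges S r \<and> wsrc (E c) = g c \<and> wtgt (E c) = g (Suc c)"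
  shows "is_path S r (g 0) (map (\<lambda>c. (E c, True)) [0..<n]) \<and>
         endpt (g 0) (map (\<lambda>c. (E c, True)) [0..<n]) = g n"
  using assms by (induction n) auto

lemma grid_path: "is_path S r Ov (grid_path a b) \<and> endpt Ov (grid_path a b) = grid_vertex hor ver a b"
proof -
  have "is_path S r (grid_vertex hor ver 0 0) (map (\<lambda>c. (grid_vedge hor ver c 0, True)) [0..<a]) \<and>
        endpt (grid_vertex hor ver 0 0) (map (\<lambda>c. (grid_vedge hor ver c 0, True)) [0..<a]) =
          grid_vertex hor ver a 0"
    by (rule is_path_line) (use grid_vedge in auto)
  moreover have "is_path S r (grid_vertex hor ver a 0) (map (\<lambda>c. (grid_hedge hor ver a c, True)) [0..<b]) \<and>
        endpt (grid_vertex hor ver a 0) (map (\<lambda>c. (grid_hedge hor ver a c, True)) [0..<b]) =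
          grid_vertex hor ver a b"
    by (rule is_path_line) (use grid_hedge in auto)
  ultimately show ?thesis
    using p0_path p0_end by (simp add: grid_path_def grid_vertex_def)
qed

lemma grid_path_Suc_right: "grid_path a (Suc b) = grid_path a b @ [(grid_hedge hor ver a b, True)]"
  by (simp add: grid_path_def)

lemma homot_grid_path_up:
  "homot S r (grid_path a b @ [(grid_vedge hor ver a b, True)]) (grid_path (Suc a) b)"
proof (induction b)
  case 0
  show ?case by (simp add: grid_path_def homot_refl)
next
  case (Suc b)
  let ?p = "grid_path a b" and ?h = "grid_hedge hor ver a b" and ?v = "grid_vedge hor ver a b"
  have p: "is_path S r Ov ?p" "endpt Ov ?p = grid_vertex hor ver a b" using grid_path by auto
  have "homot S r (?p @ [(?h, True), (grid_vedge hor ver a (Suc b), True)])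
                  (?p @ [(?v, True), (grid_hedge hor ver (Suc a) b, True)])"
    using grid_square[of a b] homot_square[OF _ p(1)] homot_sym p(2) grid_hedge grid_vedge by metis
  moreover have "homot S r ((?p @ [(?v, True)]) @ [(grid_hedge hor ver (Suc a) b, True)])
                    (grid_path (Suc a) b @ [(grid_hedge hor ver (Suc a) b, True)])"
    by (rule homot_append_right[OF Suc.IH]) (use p grid_vedge grid_hedge in simp)
  ultimately show ?case using homot_trans by (simp add: grid_path_Suc_right)
qed

lemma G_right: "G a (Suc b) = cls S r (grid_path a b @ [(grid_hedge hor ver a b, True)])"
  by (simp add: grid_path_Suc_right)

lemma G_up: "G (Suc a) b = cls S r (grid_path a b @ [(grid_vedge hor ver a b, True)])"
  using homot_grid_path_up cls_eq_iff homot_sym by metis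

lemma UE_G_right: "UE S r (G a b) (G a (Suc b))"
  unfolding G_right using UE_intro grid_path grid_hedge by metis

lemma UE_G_up: "UE S r (G a b) (G (Suc a) b)"
  unfolding G_up using UE_intro grid_path grid_vedge by metis

lemma G_in_row_filt: "G a b \<in> filt S r (G a 0)"
  unfolding filt_def prec_def
  by (induction b) (auto intro: rtranclp.rtrancl_into_rtrancl UE_G_right)

lemma G_in_filt: "G a b \<in> filt S r (cls S r p0)"
proof -
  have "prec S r (G 0 0) (G a 0)"
    unfolding prec_def by (induction a) (auto intro: rtranclp.rtrancl_into_rtrancl UE_G_up)
  moreover have "grid_path 0 0 = p0" by (simp add: grid_path_def)
  ultimately show ?thesis
    using G_in_row_filt unfolding filt_def prec_def by (metis mem_Collect_eq rtranclp_trans)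
qed

lemma nice_labeling_row:
  assumes nice: "nice_labeling S r (cls S r p0) lab"
  shows "lab (G a b, G a (Suc b)) = lab (G 0 b, G 0 (Suc b))"
proof (induction a)
  case (Suc a)
  let ?p = "grid_path a b" and ?h = "grid_hedge hor ver a b" and ?v = "grid_vedge hor ver a b"
  have p: "is_path S r Ov ?p" "endpt Ov ?p = grid_vertex hor ver a b" using grid_path by auto
  have sq: "lab (cls S r ?p, cls S r (?p @ [(e1, True)])) =
              lab (cls S r (?p @ [(f1, True)]), cls S r (?p @ [(e1, True), (e2, True)])) \<and>
            lab (cls S r ?p, cls S r (?p @ [(f1, True)])) =
              lab (cls S r (?p @ [(e1, True)]), cls S r (?p @ [(e1, True), (e2, True)]))"
    if "((e1, e2), (f1, f2)) \<in> W_squares S" "wsrc e1 = grid_vertex hor ver a b" for e1 e2 f1 f2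
    using nice G_in_filt[of a b] that p unfolding nice_labeling_def USq_def by fastforce
  have "cls S r (?p @ [(?h, True), (grid_vedge hor ver a (Suc b), True)]) = G (Suc a) (Suc b)"
    using G_up[of a "Suc b"] by (simp add: grid_path_Suc_right)
  moreover have "cls S r (?p @ [(?v, True), (grid_hedge hor ver (Suc a) b, True)]) = G (Suc a) (Suc b)"
    using homot_append_right[OF homot_grid_path_up, of a b "[(grid_hedge hor ver (Suc a) b, True)]"]
      p grid_vedge grid_hedge cls_eq_iff by (simp add: grid_path_Suc_right)
  ultimately have "lab (G a b, G a (Suc b)) = lab (G (Suc a) b, G (Suc a) (Suc b))"
    using grid_square[of a b] sq grid_hedge grid_vedge G_right G_up by (metis (no_types, lifting))
  then show ?case using Suc.IH by simp
qed simp

text \<open>Inductively, the image of the next edge of the row leaves the image of the current vertex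
  with the label of the next edge of the target row, and co-initial labels are distinct.\<close>
lemma future_iso_maps_row:
  assumes nice: "nice_labeling S r (cls S r p0) lab"
    and f: "bij_betw f (filt S r (G a 0)) (filt S r (G a' 0))"
      "\<forall>x\<in>filt S r (G a 0). \<forall>y\<in>filt S r (G a 0). UE S r x y \<longleftrightarrow> UE S r (f x) (f y)"
      "\<forall>x\<in>filt S r (G a 0). \<forall>y\<in>filt S r (G a 0). UE S r x y \<longrightarrow> lab (f x, f y) = lab (x, y)"
  shows "f (G a b) = G a' b"
proof (induction b)
  case 0
  show ?case using future_iso_root[OF f(1,2)] .
next
  case (Suc b)
  have in_filt: "G a b \<in> filt S r (G a 0)" "G a (Suc b) \<in> filt S r (G a 0)"
    using G_in_row_filt by blast+
  have "UE S r (G a' b) (f (G a (Suc b)))"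
    using f(2) in_filt UE_G_right Suc.IH by metis
  moreover have "lab (G a' b, f (G a (Suc b))) = lab (G a' b, G a' (Suc b))"
    using f(3) in_filt UE_G_right Suc.IH nice_labeling_row[OF nice] by metis
  ultimately show ?case
    using nice G_in_filt UE_G_right unfolding nice_labeling_def by metis
qed

lemma future_iso_row_words:
  assumes nice: "nice_labeling S r (cls S r p0) lab"
    and iso: "future_iso S r lab (G (2 * i) 0) (G (2 * j) 0)"
    and r: "inj r" "\<And>c. 1 \<le> r c"
  shows "hor i = hor j"
proof
  fix m
  obtain f where f: "bij_betw f (filt S r (G (2 * i) 0)) (filt S r (G (2 * j) 0))"
    "\<forall>x\<in>filt S r (G (2 * i) 0). \<forall>y\<in>filt S r (G (2 * i) 0). UE S r x y \<longleftrightarrow> UE S r (f x) (f y)"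
    "\<forall>x\<in>filt S r (G (2 * i) 0). \<forall>y\<in>filt S r (G (2 * i) 0). UE S r x y \<longrightarrow> lab (f x, f y) = lab (x, y)"
    using iso unfolding future_iso_def by blast
  have mid: "is_path S r Ov (grid_path (2 * k) (Suc (2 * m)))"
    "endpt Ov (grid_path (2 * k) (Suc (2 * m))) = Mid (Hc (hor k m))" for k
    using grid_path[of "2 * k" "Suc (2 * m)"] by (simp_all add: grid_vertex_def)
  have "has_tip S r (r (Hc (hor i m)) - 1) (G (2 * i) (Suc (2 * m)))"
    using has_tip_Mid_iff[OF mid[of i] r(2)] by simp
  from has_tip_iso[OF f(1,2) G_in_row_filt this]
  have "has_tip S r (r (Hc (hor i m)) - 1) (G (2 * j) (Suc (2 * m)))"
    unfolding future_iso_maps_row[OF nice f] .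
  then have "r (Hc (hor i m)) - 1 = r (Hc (hor j m)) - 1"
    using has_tip_Mid_iff[OF mid[of j] r(2)] by simp
  then have "r (Hc (hor i m)) = r (Hc (hor j m))"
    using r(2)[of "Hc (hor i m)"] r(2)[of "Hc (hor j m)"] by linarith
  then show "hor i m = hor j m" using injD[OF r(1)] by blast
qed

end

theorem theorem6p5:
  fixes S :: "sqr set" and r :: "col \<Rightarrow> nat" and p0 :: wpath
  assumes X_squares: "card S = 6"
    and X_complete: "link_complete S"
    and X_plane: "\<exists>hor ver. directed_plane S hor ver \<and> \<not> doubly_periodic hor ver"
    and X_words: "quarter_words S"
    and r_bij: "bij_betw r UNIV {1..5}"
    and p0_path: "is_path S r Ov p0"
    and p0_end: "endpt Ov p0 = Ov"
  shows "regular_domain S r (cls S r p0) \<and>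
         \<not> (\<exists>lab :: wpath set \<times> wpath set \<Rightarrow> 'l. regular_nice_labeling S r (cls S r p0) lab)"
proof
  have "finite S" using X_squares by (intro card_ge_0_finite) simp
  then show "regular_domain S r (cls S r p0)" using regular_domain_cls p0_path by blast
next
  obtain hor ver where "quarter_plane S hor ver"
    and words: "\<And>n. inj_on (\<lambda>k. map (hor k) [0..<n]) {..<2 ^ n}"
    using X_words unfolding quarter_words_def by blast
  then interpret quarter_grid S r p0 hor ver
    using p0_path p0_end by unfold_locales (auto simp: quarter_plane_def quarter_sq_def)
  have r: "inj r" "\<And>c. 1 \<le> r c"
    using r_bij by (auto simp: bij_betw_def)
  show "\<not> (\<exists>lab :: wpath set \<times> wpath set \<Rightarrow> 'l. regular_nice_labeling S r (cls S r p0) lab)"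
  proof
    assume "\<exists>lab :: wpath set \<times> wpath set \<Rightarrow> 'l. regular_nice_labeling S r (cls S r p0) lab"
    then obtain lab :: "wpath set \<times> wpath set \<Rightarrow> 'l"
      where reg: "regular_nice_labeling S r (cls S r p0) lab" by blast
    obtain i j where "i \<noteq> j" "future_iso S r lab (G (2 * i) 0) (G (2 * j) 0)"
      using regular_labeling_future_iso_pair[OF reg G_in_filt] .
    then have "hor i = hor j"
      using future_iso_row_words reg r unfolding regular_nice_labeling_def by blast
    moreover have "i < 2 ^ (i + j)" "j < 2 ^ (i + j)"
      using less_exp[of i] less_exp[of j] power_increasing[of _ "i + j" "2::nat"]
      by (metis le_add1 le_add2 less_le_trans one_le_numeral)+
    ultimately show False using inj_onD[OF words[of "i + j"], of i j] \<open>i \<noteq> j\<close> by simp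
  qed
qed

end
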